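(* Let $a=0.68$, $b=0.1$, $\omega\in\mathbb{R}$ and $0<\varepsilon\le\frac12$, and consider the rotating Hénon map $F_\varepsilon:\mathbb{T}^1\times\mathbb{R}^2\to\mathbb{T}^1\times\mathbb{R}^2$, $$F_\varepsilon(\theta,x,y)=\big(\theta+\omega \ (\mathrm{mod}\ 1),\ 1+y-ax^2+\varepsilon\cos(2\pi\theta),\ bx\big).$$ Let $$x_-=\frac{-(1-b)-\sqrt{(1-b)^2+4a}}{2a},\qquad y_-=bx_-,$$ and $$U_\varepsilon=\mathbb{T}^1\times[x_--1.1\varepsilon,\,x_-+1.1\varepsilon]\times[y_--0.12\varepsilon,\,y_-+0.12\varepsilon].$$ Then there exists an invariant $C^0$ manifold of $F_\varepsilon$ which is homeomorphic to $\mathbb{T}^1$ and is contained in $U_\varepsilon$.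
   Context: $\mathbb{T}^1=\mathbb{R}/\mathbb{Z}$. The point $(x_-,y_-)$ is a fixed point of the Hénon map $(x,y)\mapsto(1+y-ax^2,bx)$ ($x_-\approx-2.0433$). *)

theory Defs
  imports "HOL-Analysis.Analysis"
begin

text \<open>The circle T^1 = R/Z is modelled by the unit circle in the complex plane,
  via the standard homeomorphism theta \<mapsto> cis (2 pi theta). Under it, rotation by
  omega becomes multiplication by cis (2 pi omega) and cos (2 pi theta) becomes Re z.\<close>

definition rot_henon :: "real \<Rightarrow> real \<Rightarrow> real \<Rightarrow> real \<Rightarrow>
    complex \<times> real \<times> real \<Rightarrow> complex \<times> real \<times> real" where
  "rot_henon a b \<omega> \<epsilon> = (\<lambda>(z, x, y). (cis (2 * pi * \<omega>) * z, 1 + y - a * x\<^sup>2 + \<epsilon> * Re z, b * x))"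

definition x_minus :: "real \<Rightarrow> real \<Rightarrow> real" where
  "x_minus a b = (- (1 - b) - sqrt ((1 - b)\<^sup>2 + 4 * a)) / (2 * a)"

definition y_minus :: "real \<Rightarrow> real \<Rightarrow> real" where
  "y_minus a b = b * x_minus a b"

definition U_eps :: "real \<Rightarrow> real \<Rightarrow> real \<Rightarrow> (complex \<times> real \<times> real) set" where
  "U_eps a b \<epsilon> = sphere (0::complex) 1 \<times>
     ({x_minus a b - 1.1 * \<epsilon> .. x_minus a b + 1.1 * \<epsilon>} \<times>
      {y_minus a b - 0.12 * \<epsilon> .. y_minus a b + 0.12 * \<epsilon>})"

end

theory Submission
  imports Defs
begin

text \<open>The invariant circle is sought as a graph over the circle \<open>\<bar>z\<bar> = 1\<close>: the point over \<open>z\<close>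
  is \<open>(z, v z, 0.1 v (z/r))\<close>, where \<open>r = cis (2\<pi>\<omega>)\<close> is the rotation. Invariance of the graph
  amounts to the functional equation \<open>0.68 (v z)\<^sup>2 = 1 + 0.1 v (z/r) + \<epsilon> Re z - v (r z)\<close>.
  Solving for the negative root turns it into a fixed-point problem for bounded continuous
  functions with values in \<open>[x\<^sub>- - 1.1\<epsilon>, x\<^sub>- + 1.1\<epsilon>]\<close>. On this set the radicand stays
  above \<open>2.5\<close>, so the square root is Lipschitz with constant \<open>1/3.16\<close>; this makes the
  operator a self-map and a contraction with constant \<open>0.52\<close>, and Banach's fixed point
  theorem provides \<open>v\<close>.\<close>

lemma henon_fixed_point:
  assumes "0 < a"
  shows "1 + y_minus a b - a * (x_minus a b)\<^sup>2 = x_minus a b"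
proof -
  define s where "s = sqrt ((1 - b)\<^sup>2 + 4 * a)"
  have s2: "s\<^sup>2 = (1 - b)\<^sup>2 + 4 * a"
    unfolding s_def using assms by (simp add: add_nonneg_pos)
  have "4 * a\<^sup>2 * (1 + b * x_minus a b - a * (x_minus a b)\<^sup>2 - x_minus a b) = 0"
    unfolding x_minus_def s_def[symmetric] using assms
    by (simp add: field_simps power2_eq_square) (use s2 in algebra)
  then show ?thesis
    unfolding y_minus_def using assms by simp
qed

abbreviation xm :: real where "xm \<equiv> x_minus 0.68 0.1"

lemma xm_bounds: "-2.05 < xm" "xm < -2.04"
proof -
  have xm_eq: "xm = (- 0.9 - sqrt 3.53) / 1.36"
    unfolding x_minus_def by (simp add: power2_eq_square)
  have "1.878 < sqrt (3.53::real)"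
    by (rule real_less_rsqrt) (simp add: power2_eq_square)
  moreover have "sqrt (3.53::real) < 1.879"
    by (rule real_less_lsqrt) (simp_all add: power2_eq_square)
  ultimately show "-2.05 < xm" "xm < -2.04"
    unfolding xm_eq by simp_all
qed

lemma xm_fixed: "1 + 0.1 * xm - 0.68 * xm\<^sup>2 = xm"
  using henon_fixed_point[of "0.68" "0.1"] unfolding y_minus_def by simp

lemma xm_square_ge: "4.16 \<le> xm\<^sup>2"
proof -
  have "2.04\<^sup>2 \<le> (- xm)\<^sup>2"
    using xm_bounds by (intro power_mono) auto
  then show ?thesis by (simp add: power2_eq_square)
qed

lemma abs_sqrt_diff_le:
  fixes m p q :: real
  assumes "0 < m" "m\<^sup>2 \<le> p" "m\<^sup>2 \<le> q"
  shows "\<bar>sqrt p - sqrt q\<bar> \<le> \<bar>p - q\<bar> / (2 * m)"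
proof -
  have "0 \<le> p" "0 \<le> q" using assms(2,3) zero_le_power2[of m] by linarith+
  have "m \<le> sqrt p" "m \<le> sqrt q" using assms by (auto intro: real_le_rsqrt)
  then have "\<bar>sqrt p - sqrt q\<bar> * (2 * m) \<le> \<bar>sqrt p - sqrt q\<bar> * (sqrt p + sqrt q)"
    by (intro mult_left_mono) auto
  also have "\<dots> = \<bar>(sqrt p - sqrt q) * (sqrt p + sqrt q)\<bar>"
    using \<open>0 < m\<close> \<open>m \<le> sqrt p\<close> \<open>m \<le> sqrt q\<close> by (simp add: abs_mult)
  also have "\<dots> = \<bar>p - q\<bar>"
    using \<open>0 \<le> p\<close> \<open>0 \<le> q\<close> by (simp add: algebra_simps)
  finally show ?thesis using assms(1) by (simp add: field_simps)
qed

text \<open>\<open>henon_root s u w\<close> is the negative solution \<open>x\<close> of \<open>0.68 x\<^sup>2 = 1 + 0.1 u + s - w\<close>: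
  the \<open>x\<close>-coordinate a point must have if its predecessor and successor along an orbit
  have \<open>x\<close>-coordinates \<open>u\<close> and \<open>w\<close> and the forcing at that point is \<open>s\<close>.\<close>

definition henon_root :: "real \<Rightarrow> real \<Rightarrow> real \<Rightarrow> real" where
  "henon_root s u w = - sqrt ((1 + 0.1 * u + s - w) / 0.68)"

lemma henon_radicand_near_square:
  assumes "\<bar>u - xm\<bar> \<le> 1.1 * e" "\<bar>w - xm\<bar> \<le> 1.1 * e" "\<bar>s\<bar> \<le> e"
  shows "\<bar>(1 + 0.1 * u + s - w) / 0.68 - xm\<^sup>2\<bar> \<le> 3.25 * e"
proof -
  have "(1 + 0.1 * u + s - w) / 0.68 - xm\<^sup>2 = (0.1 * (u - xm) + s - (w - xm)) / 0.68"
    using xm_fixed by (simp add: field_simps)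
  then show ?thesis using assms unfolding abs_le_iff by (simp add: field_simps)
qed

lemma henon_radicand_ge:
  assumes "e \<le> 1/2" "\<bar>u - xm\<bar> \<le> 1.1 * e" "\<bar>w - xm\<bar> \<le> 1.1 * e" "\<bar>s\<bar> \<le> e"
  shows "2.5 \<le> (1 + 0.1 * u + s - w) / 0.68"
proof -
  define R where "R = (1 + 0.1 * u + s - w) / 0.68"
  have "\<bar>R - xm\<^sup>2\<bar> \<le> 3.25 * e"
    unfolding R_def by (rule henon_radicand_near_square[OF assms(2-4)])
  then have "2.5 \<le> R"
    using xm_square_ge assms(1) unfolding abs_le_iff by auto
  then show ?thesis unfolding R_def .
qed

lemma henon_root_near_xm:
  assumes "e \<le> 1/2" "\<bar>u - xm\<bar> \<le> 1.1 * e" "\<bar>w - xm\<bar> \<le> 1.1 * e" "\<bar>s\<bar> \<le> e"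
  shows "\<bar>henon_root s u w - xm\<bar> \<le> 1.1 * e"
proof -
  define R where "R = (1 + 0.1 * u + s - w) / 0.68"
  have "\<bar>henon_root s u w - xm\<bar> = \<bar>sqrt R - sqrt (xm\<^sup>2)\<bar>"
    using xm_bounds unfolding henon_root_def R_def by simp
  also have "\<dots> \<le> \<bar>R - xm\<^sup>2\<bar> / (2 * 1.58)"
    using henon_radicand_ge[OF assms] xm_square_ge unfolding R_def
    by (intro abs_sqrt_diff_le) (simp_all add: power2_eq_square)
  also have "\<dots> \<le> 1.1 * e"
    using henon_radicand_near_square[OF assms(2-4), folded R_def] abs_ge_zero[of s] assms(4)
    by simp
  finally show ?thesis .
qed

lemma henon_root_lipschitz:
  assumes "e \<le> 1/2" "\<bar>s\<bar> \<le> e"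
    and "\<bar>u - xm\<bar> \<le> 1.1 * e" "\<bar>w - xm\<bar> \<le> 1.1 * e"
    and "\<bar>u' - xm\<bar> \<le> 1.1 * e" "\<bar>w' - xm\<bar> \<le> 1.1 * e"
    and "\<bar>u - u'\<bar> \<le> d" "\<bar>w - w'\<bar> \<le> d"
  shows "\<bar>henon_root s u w - henon_root s u' w'\<bar> \<le> 0.52 * d"
proof -
  define R where "R = (1 + 0.1 * u + s - w) / 0.68"
  define R' where "R' = (1 + 0.1 * u' + s - w') / 0.68"
  have "\<bar>henon_root s u w - henon_root s u' w'\<bar> = \<bar>sqrt R - sqrt R'\<bar>"
    unfolding henon_root_def R_def R'_def by simp
  also have "\<dots> \<le> \<bar>R - R'\<bar> / (2 * 1.58)"
    using henon_radicand_ge[of e u w s] henon_radicand_ge[of e u' w' s] assms(1-6)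
    unfolding R_def R'_def by (intro abs_sqrt_diff_le) (simp_all add: power2_eq_square)
  also have "\<dots> \<le> 0.52 * d"
  proof -
    have "R - R' = (0.1 * (u - u') - (w - w')) / 0.68"
      unfolding R_def R'_def by (simp add: field_simps)
    then have "\<bar>R - R'\<bar> = \<bar>0.1 * (u - u') - (w - w')\<bar> / 0.68"
      by (simp only: abs_divide) simp
    also have "\<dots> \<le> 1.1 * d / 0.68"
      using abs_triangle_ineq4[of "0.1 * (u - u')" "w - w'"] assms(7,8)
      by (intro divide_right_mono) (simp_all add: abs_mult)
    finally have "\<bar>R - R'\<bar> \<le> 1.1 * d / 0.68" .
    then show ?thesis using abs_ge_zero[of "u - u'"] assms(7) by simp
  qed
  finally show ?thesis .
qed

lemma henon_root_solves:
  assumes "e \<le> 1/2" "\<bar>u - xm\<bar> \<le> 1.1 * e" "\<bar>w - xm\<bar> \<le> 1.1 * e" "\<bar>s\<bar> \<le> e"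
  shows "1 + 0.1 * u - 0.68 * (henon_root s u w)\<^sup>2 + s = w"
proof -
  have "(henon_root s u w)\<^sup>2 = (1 + 0.1 * u + s - w) / 0.68"
    using henon_radicand_ge[OF assms] unfolding henon_root_def by simp
  then show ?thesis by (simp add: field_simps)
qed

lemma henon_operator_bcontfun:
  fixes p q :: "'a::metric_space \<Rightarrow> 'a" and g :: "'a \<Rightarrow>\<^sub>C real"
  assumes "e \<le> 1/2" and f: "continuous_on UNIV f" "\<And>z. \<bar>f z\<bar> \<le> e"
    and pq: "continuous_on UNIV p" "continuous_on UNIV q"
    and g: "\<And>z. \<bar>g z - xm\<bar> \<le> 1.1 * e"
  shows "(\<lambda>z. henon_root (f z) (g (p z)) (g (q z))) \<in> bcontfun"
proof (rule bcontfun_normI)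
  have g_comp: "continuous_on UNIV (\<lambda>z. g (h z))" if "continuous_on UNIV h" for h
    by (rule continuous_on_compose2[OF continuous_on_apply_bcontfun that]) auto
  show "continuous_on UNIV (\<lambda>z. henon_root (f z) (g (p z)) (g (q z)))"
    unfolding henon_root_def by (intro continuous_intros g_comp f pq) simp
  show "norm (henon_root (f z) (g (p z)) (g (q z))) \<le> \<bar>xm\<bar> + 1.1 * e" for z
    using henon_root_near_xm[OF assms(1) g[of "p z"] g[of "q z"] f(2)[of z]]
      abs_triangle_ineq2[of "henon_root (f z) (g (p z)) (g (q z))" xm]
    unfolding real_norm_def by linarith
qed

lemma henon_functional_equation_solvable:
  fixes p q :: "'a::metric_space \<Rightarrow> 'a" and f :: "'a \<Rightarrow> real"
  assumes "e \<le> 1/2" and f: "continuous_on UNIV f" "\<And>z. \<bar>f z\<bar> \<le> e"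
    and pq: "continuous_on UNIV p" "continuous_on UNIV q"
  shows "\<exists>v. continuous_on UNIV v \<and> (\<forall>z. \<bar>v z - xm\<bar> \<le> 1.1 * e)
           \<and> (\<forall>z. v z = henon_root (f z) (v (p z)) (v (q z)))"
proof -
  define S :: "('a \<Rightarrow>\<^sub>C real) set" where "S = PiC UNIV (\<lambda>_. {xm - 1.1 * e .. xm + 1.1 * e})"
  define \<Phi> where "\<Phi> g z = henon_root (f z) (g (p z)) (g (q z))" for g :: "'a \<Rightarrow> real" and z
  define T where "T g = Bcontfun (\<Phi> (apply_bcontfun g))" for g
  have inS: "g \<in> S \<longleftrightarrow> (\<forall>z. \<bar>apply_bcontfun g z - xm\<bar> \<le> 1.1 * e)" for g
  proof -
    have "x \<in> {xm - 1.1 * e .. xm + 1.1 * e} \<longleftrightarrow> \<bar>x - xm\<bar> \<le> 1.1 * e" for x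
      unfolding atLeastAtMost_iff abs_le_iff by linarith
    then show ?thesis unfolding S_def mem_PiC_iff Pi_def by auto
  qed
  have \<Phi>_near: "\<bar>\<Phi> (apply_bcontfun g) z - xm\<bar> \<le> 1.1 * e" if "g \<in> S" for g z
    unfolding \<Phi>_def using that assms(1) f(2) by (intro henon_root_near_xm) (auto simp: inS)
  have T_apply: "apply_bcontfun (T g) = \<Phi> (apply_bcontfun g)" if "g \<in> S" for g
    unfolding T_def \<Phi>_def using that assms
    by (subst Bcontfun_inverse) (auto intro: henon_operator_bcontfun simp: inS)
  have "\<exists>!u\<in>S. T u = u"
  proof (rule Banach_fix[where c = "0.52"])
    show "complete S"
      unfolding complete_eq_closed S_def by (rule closed_PiC) simp
    show "S \<noteq> {}"
      using inS[of "const_bcontfun xm"] f(2)[of undefined] by fastforce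
    show "T ` S \<subseteq> S"
      using \<Phi>_near by (auto simp: inS T_apply)
    show "dist (T g) (T h) \<le> 0.52 * dist g h" if "g \<in> S" "h \<in> S" for g h
    proof (rule dist_bound)
      fix z
      have "\<bar>apply_bcontfun g y - apply_bcontfun h y\<bar> \<le> dist g h" for y
        using dist_bounded[of g y h] by (simp add: dist_real_def)
      then show "dist (T g z) (T h z) \<le> 0.52 * dist g h"
        unfolding T_apply[OF that(1)] T_apply[OF that(2)] dist_real_def \<Phi>_def
        using that assms(1) f(2) by (intro henon_root_lipschitz) (auto simp: inS)
    qed
  qed simp_all
  then obtain u where "u \<in> S" "T u = u" by blast
  then have "apply_bcontfun u = \<Phi> (apply_bcontfun u)"
    using T_apply by metis
  then have "apply_bcontfun u z = henon_root (f z) (apply_bcontfun u (p z)) (apply_bcontfun u (q z))" for z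
    unfolding \<Phi>_def by metis
  then show ?thesis
    using \<open>u \<in> S\<close> inS continuous_on_apply_bcontfun[of UNIV u] by blast
qed

lemma homeomorphic_graph:
  assumes "continuous_on S f"
  shows "(\<lambda>x. (x, f x)) ` S homeomorphic S"
proof -
  have "homeomorphism S ((\<lambda>x. (x, f x)) ` S) (\<lambda>x. (x, f x)) fst"
    using assms by (intro homeomorphismI) (auto intro!: continuous_intros)
  then show ?thesis using homeomorphic_def homeomorphic_sym by blast
qed

lemma image_mult_unit_sphere:
  fixes r :: complex
  assumes "norm r = 1"
  shows "(\<lambda>z. r * z) ` sphere 0 1 = sphere 0 1"
proof
  show "(\<lambda>z. r * z) ` sphere 0 1 \<subseteq> sphere 0 1"
    using assms by (auto simp: norm_mult)
  have "r * cnj r = 1"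
    using assms complex_norm_square[of r] by simp
  show "sphere 0 1 \<subseteq> (\<lambda>z. r * z) ` sphere 0 1"
  proof
    fix w :: complex
    assume "w \<in> sphere 0 1"
    then have "cnj r * w \<in> sphere 0 1"
      using assms by (simp add: norm_mult)
    moreover have "w = r * (cnj r * w)"
      using \<open>r * cnj r = 1\<close> by (simp add: mult.assoc[symmetric])
    ultimately show "w \<in> (\<lambda>z. r * z) ` sphere 0 1"
      by (rule rev_image_eqI)
  qed
qed

lemma rot_henon_graph:
  fixes \<omega> e :: real and v :: "complex \<Rightarrow> real"
  assumes "r = cis (2 * pi * \<omega>)" "0 \<le> e" "e \<le> 1/2" "norm z = 1"
    and "v z = henon_root (e * Re z) (v (cnj r * z)) (v (r * z))"
    and "\<bar>v (cnj r * z) - xm\<bar> \<le> 1.1 * e" "\<bar>v (r * z) - xm\<bar> \<le> 1.1 * e"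
  shows "rot_henon 0.68 0.1 \<omega> e (z, v z, 0.1 * v (cnj r * z))
           = (r * z, v (r * z), 0.1 * v (cnj r * (r * z)))"
proof -
  have "\<bar>e * Re z\<bar> \<le> e"
    using assms(2,4) abs_Re_le_cmod[of z] by (simp add: abs_mult mult_left_le)
  then have henon_step: "1 + 0.1 * v (cnj r * z) - 0.68 * (v z)\<^sup>2 + e * Re z = v (r * z)"
    using henon_root_solves[OF assms(3,6,7)] unfolding assms(5) by blast
  have rotate_back: "cnj r * (r * z) = z"
    unfolding assms(1) by (simp add: mult.assoc[symmetric] cis_cnj cis_mult)
  show ?thesis
    unfolding rot_henon_def assms(1)[symmetric] rotate_back using henon_step by simp
qed

lemma rot_henon_invariant_graph:
  fixes \<omega> e :: real
  assumes r: "r = cis (2 * pi * \<omega>)" and e: "0 < e" "e \<le> 1/2"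
  obtains v :: "complex \<Rightarrow> real"
  where "continuous_on UNIV v" "\<And>z. \<bar>v z - xm\<bar> \<le> 1.1 * e"
    "\<And>z. norm z = 1 \<Longrightarrow> rot_henon 0.68 0.1 \<omega> e (z, v z, 0.1 * v (cnj r * z))
                           = (r * z, v (r * z), 0.1 * v (cnj r * (r * z)))"
proof -
  text \<open>Clamping \<open>Re z\<close> to \<open>[-1, 1]\<close> keeps the forcing bounded on all of \<open>\<complex>\<close>
    without changing it on the unit circle.\<close>
  define c where "c z = max (-1) (min 1 (Re z))" for z
  have forcing_cont: "continuous_on UNIV (\<lambda>z. e * c z)"
    unfolding c_def by (intro continuous_intros)
  have forcing_bound: "\<bar>e * c z\<bar> \<le> e" for z
  proof -
    have "\<bar>c z\<bar> \<le> 1" unfolding c_def by auto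
    then show ?thesis using e(1) by (simp add: abs_mult mult_left_le)
  qed
  have rotations_cont: "continuous_on UNIV (\<lambda>z. cnj r * z)" "continuous_on UNIV (\<lambda>z. r * z)"
    by (intro continuous_intros)+
  obtain v where v_cont: "continuous_on UNIV v" and v_near: "\<And>z. \<bar>v z - xm\<bar> \<le> 1.1 * e"
    and v_eq: "\<And>z. v z = henon_root (e * c z) (v (cnj r * z)) (v (r * z))"
    using henon_functional_equation_solvable[OF e(2) forcing_cont forcing_bound rotations_cont]
    by blast
  have "c z = Re z" if "norm z = 1" for z
    using that abs_Re_le_cmod[of z] unfolding c_def by (auto simp: abs_le_iff)
  then have "rot_henon 0.68 0.1 \<omega> e (z, v z, 0.1 * v (cnj r * z))
               = (r * z, v (r * z), 0.1 * v (cnj r * (r * z)))" if "norm z = 1" for z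
    using that e v_near v_eq[of z] by (intro rot_henon_graph[OF r]) simp_all
  with v_cont v_near show thesis by (rule that)
qed

theorem mainTheorem8:
  fixes \<omega> \<epsilon> :: real
  assumes "0 < \<epsilon>" and "\<epsilon> \<le> 1/2"
  shows "\<exists>K :: (complex \<times> real \<times> real) set.
           rot_henon 0.68 0.1 \<omega> \<epsilon> ` K = K
         \<and> K homeomorphic sphere (0::complex) 1
         \<and> K \<subseteq> U_eps 0.68 0.1 \<epsilon>"
proof -
  define r where "r = cis (2 * pi * \<omega>)"
  define F where "F = rot_henon 0.68 0.1 \<omega> \<epsilon>"
  obtain v where v_cont: "continuous_on UNIV v" and v_near: "\<And>z. \<bar>v z - xm\<bar> \<le> 1.1 * \<epsilon>"
    and v_graph: "\<And>z. norm z = 1 \<Longrightarrow> F (z, v z, 0.1 * v (cnj r * z))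
                                    = (r * z, v (r * z), 0.1 * v (cnj r * (r * z)))"
    using rot_henon_invariant_graph[OF r_def assms] unfolding F_def by blast
  define g where "g z = (z, v z, 0.1 * v (cnj r * z))" for z
  have "F ` g ` sphere 0 1 = g ` (\<lambda>z. r * z) ` sphere 0 1"
    using v_graph unfolding g_def by (simp add: image_image)
  also have "\<dots> = g ` sphere 0 1"
    unfolding r_def by (simp add: image_mult_unit_sphere)
  finally have "F ` g ` sphere 0 1 = g ` sphere 0 1" .
  moreover have "continuous_on UNIV (\<lambda>z. (v z, 0.1 * v (cnj r * z)))"
    by (intro continuous_intros v_cont continuous_on_compose2[OF v_cont]) auto
  then have "g ` sphere 0 1 homeomorphic sphere (0::complex) 1"
    using continuous_on_subset[OF _ subset_UNIV] unfolding g_def by (intro homeomorphic_graph)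
  moreover have "g z \<in> U_eps 0.68 0.1 \<epsilon>" if "z \<in> sphere 0 1" for z
    using that v_near[of z] v_near[of "cnj r * z"] assms(1)
    unfolding U_eps_def y_minus_def g_def abs_le_iff by auto
  ultimately show ?thesis unfolding F_def by blast
qed

end
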